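(* Let $G$ be a subgroup of $K^*$ and let $K^*$ act on the set of left cosets $K^*/G$ by ${}^{a}(bG)=(ab)G$. Then: (1) A function $f\colon K^*/G\to K$ is skew convex if and only if there exists a right $G$-linear map $\phi_f\colon K\to K$ such that $f(xG)=\phi_f(x)x^{-1}$ for all $x\in K^*$; such $\phi_f$ is unique. (2) The assignment $f\mapsto\phi_f$ is a ring isomorphism from $\mathcal S(K^*/G)$ onto the ring $\mathrm{End}(K_G)$ of right $G$-linear maps $K\to K$ (with pointwise addition and composition as multiplication).
   Context: Let $K$ be a skew field, $K^*=K\setminus\{0\}$. For a nonempty set $Z$ with a left $K^*$-action $(a,z)\mapsto{}^{a}z$, $\mathcal F(Z)$ is the set of functions $Z\to K$ with pointwise addition; the constant function with value $a\in K$ is denoted $a$. The skew product is $(f\diamond g)(z)=f({}^{g(z)}z)\,g(z)$ if $g(z)\neq0$ and $0$ if $g(z)=0$. A function $f$ is skew convex if $f\diamond(a+b)=f\diamond a+f\diamond b$ for all $a,b\in K$; $\mathcal S(Z)$ is the ring of skew-convex functions on $Z$ under pointwise addition and $\diamond$. A map $\phi\colon K\to K$ is right $G$-linear if $\phi(a-b)=\phi(a)-\phi(b)$ and $\phi(ac)=\phi(a)c$ for all $a,b\in K$, $c\in G$. *)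

theory Defs
  imports Main "HOL-Library.FuncSet"
begin

text \<open>Skew field K = type of class division_ring; K^* = K - {0}.\<close>

definition skew_prod :: "('a \<Rightarrow> 'z \<Rightarrow> 'z) \<Rightarrow> ('z \<Rightarrow> 'a::division_ring) \<Rightarrow> ('z \<Rightarrow> 'a) \<Rightarrow> 'z \<Rightarrow> 'a" where
  "skew_prod act f g z = (if g z = 0 then 0 else f (act (g z) z) * g z)"

definition skew_convex :: "'z set \<Rightarrow> ('a \<Rightarrow> 'z \<Rightarrow> 'z) \<Rightarrow> ('z \<Rightarrow> 'a::division_ring) \<Rightarrow> bool" where
  "skew_convex Z act f \<longleftrightarrow>
     (\<forall>a b. \<forall>z\<in>Z. skew_prod act f (\<lambda>_. a + b) z
                    = skew_prod act f (\<lambda>_. a) z + skew_prod act f (\<lambda>_. b) z)"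

definition S_carrier :: "'z set \<Rightarrow> ('a \<Rightarrow> 'z \<Rightarrow> 'z) \<Rightarrow> ('z \<Rightarrow> 'a::division_ring) set" where
  "S_carrier Z act = {f. f \<in> extensional Z \<and> skew_convex Z act f}"

definition S_add :: "'z set \<Rightarrow> ('z \<Rightarrow> 'a::division_ring) \<Rightarrow> ('z \<Rightarrow> 'a) \<Rightarrow> 'z \<Rightarrow> 'a" where
  "S_add Z f g = (\<lambda>z\<in>Z. f z + g z)"

definition S_mult :: "'z set \<Rightarrow> ('a \<Rightarrow> 'z \<Rightarrow> 'z) \<Rightarrow> ('z \<Rightarrow> 'a::division_ring) \<Rightarrow> ('z \<Rightarrow> 'a) \<Rightarrow> 'z \<Rightarrow> 'a" where
  "S_mult Z act f g = (\<lambda>z\<in>Z. skew_prod act f g z)"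

definition S_one :: "'z set \<Rightarrow> 'z \<Rightarrow> 'a::division_ring" where
  "S_one Z = (\<lambda>z\<in>Z. 1)"

definition mult_subgroup :: "'a::division_ring set \<Rightarrow> bool" where
  "mult_subgroup G \<longleftrightarrow> 0 \<notin> G \<and> 1 \<in> G \<and> (\<forall>x\<in>G. \<forall>y\<in>G. x * y \<in> G) \<and> (\<forall>x\<in>G. inverse x \<in> G)"

definition lcoset :: "'a::division_ring \<Rightarrow> 'a set \<Rightarrow> 'a set" where
  "lcoset x G = (\<lambda>g. x * g) ` G"

definition cosets :: "'a::division_ring set \<Rightarrow> 'a set set" where
  "cosets G = {lcoset x G | x. x \<noteq> 0}"

definition coset_act :: "'a::division_ring \<Rightarrow> 'a set \<Rightarrow> 'a set" where
  "coset_act a z = (\<lambda>y. a * y) ` z"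

definition right_G_linear :: "'a::division_ring set \<Rightarrow> ('a \<Rightarrow> 'a) \<Rightarrow> bool" where
  "right_G_linear G \<phi> \<longleftrightarrow> (\<forall>a b. \<phi> (a - b) = \<phi> a - \<phi> b) \<and> (\<forall>a. \<forall>c\<in>G. \<phi> (a * c) = \<phi> a * c)"

definition phi_of :: "'a::division_ring set \<Rightarrow> ('a set \<Rightarrow> 'a) \<Rightarrow> 'a \<Rightarrow> 'a" where
  "phi_of G f = (THE \<phi>. right_G_linear G \<phi> \<and> (\<forall>x. x \<noteq> 0 \<longrightarrow> f (lcoset x G) = \<phi> x * inverse x))"

end

theory Submission
  imports Defs
begin

text \<open>A function \<open>f\<close> on \<open>K\<^sup>*/G\<close> is encoded by \<open>\<phi>\<^sub>f(x) = f(xG) x\<close> (and \<open>\<phi>\<^sub>f(0) = 0\<close>).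
  Right \<open>G\<close>-linearity of \<open>\<phi>\<^sub>f\<close> is just the statement that \<open>f(xcG) = f(xG)\<close> for \<open>c \<in> G\<close>,
  and the skew product of two represented functions is represented by the composite:
  \<open>(f \<diamond> g)(xG) = f(\<phi>\<^sub>g(x)G) \<phi>\<^sub>g(x) x\<^sup>-\<^sup>1 = \<phi>\<^sub>f(\<phi>\<^sub>g(x)) x\<^sup>-\<^sup>1\<close>.
  Since the constant \<open>a\<close> is represented by left multiplication with \<open>a\<close>, skew convexity
  of \<open>f\<close> evaluated at the coset \<open>1G\<close> says exactly that \<open>\<phi>\<^sub>f\<close> is additive, and conversely
  additivity of \<open>\<phi>\<^sub>f\<close> gives skew convexity at every coset.\<close>

definition represents :: "'a::division_ring set \<Rightarrow> ('a \<Rightarrow> 'a) \<Rightarrow> ('a set \<Rightarrow> 'a) \<Rightarrow> bool" where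
  "represents G \<phi> f \<longleftrightarrow> (\<forall>x. x \<noteq> 0 \<longrightarrow> f (lcoset x G) = \<phi> x * inverse x)"

definition phi_expl :: "'a::division_ring set \<Rightarrow> ('a set \<Rightarrow> 'a) \<Rightarrow> 'a \<Rightarrow> 'a" where
  "phi_expl G f = (\<lambda>x. if x = 0 then 0 else f (lcoset x G) * x)"

definition coset_rep :: "'a::division_ring set \<Rightarrow> 'a set \<Rightarrow> 'a" where
  "coset_rep G z = (SOME x. x \<noteq> 0 \<and> z = lcoset x G)"

definition coset_fun :: "'a::division_ring set \<Rightarrow> ('a \<Rightarrow> 'a) \<Rightarrow> 'a set \<Rightarrow> 'a" where
  "coset_fun G \<phi> = (\<lambda>z\<in>cosets G. \<phi> (coset_rep G z) * inverse (coset_rep G z))"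

lemma right_G_linear_zero: "right_G_linear G \<phi> \<Longrightarrow> \<phi> 0 = 0"
  unfolding right_G_linear_def by (metis diff_self)

lemma right_G_linear_add:
  assumes "right_G_linear G \<phi>"
  shows "\<phi> (a + b) = \<phi> a + \<phi> b"
proof -
  have "\<phi> (- b) = - \<phi> b"
    using assms right_G_linear_zero[OF assms] unfolding right_G_linear_def by (metis diff_0)
  moreover have "\<phi> (a - (- b)) = \<phi> a - \<phi> (- b)"
    using assms unfolding right_G_linear_def by blast
  ultimately show ?thesis by simp
qed

lemma right_G_linear_compose_add:
  "right_G_linear G \<phi> \<Longrightarrow> right_G_linear G \<psi> \<Longrightarrow> right_G_linear G (\<lambda>x. \<phi> x + \<psi> x)"
  unfolding right_G_linear_def by (auto simp: distrib_right)

lemma right_G_linear_compose: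
  "right_G_linear G \<phi> \<Longrightarrow> right_G_linear G \<psi> \<Longrightarrow> right_G_linear G (\<phi> \<circ> \<psi>)"
  unfolding right_G_linear_def by auto

lemma right_G_linear_id: "right_G_linear G id"
  unfolding right_G_linear_def by simp

lemma right_G_linear_mult_inverse_invariant:
  assumes "right_G_linear G \<phi>" "c \<in> G" "c \<noteq> 0"
  shows "\<phi> (x * c) * inverse (x * c) = \<phi> x * inverse x"
proof (cases "x = 0")
  case True
  then show ?thesis by simp
next
  case False
  have "\<phi> (x * c) * inverse (x * c) = \<phi> x * c * (inverse c * inverse x)"
    using assms False unfolding right_G_linear_def by (simp add: nonzero_inverse_mult_distrib)
  also have "\<dots> = \<phi> x * (c * inverse c) * inverse x"
    by (simp only: mult.assoc)
  finally show ?thesis using assms(3) by simp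
qed

lemma mult_subgroup_nonzero: "mult_subgroup G \<Longrightarrow> c \<in> G \<Longrightarrow> c \<noteq> 0"
  unfolding mult_subgroup_def by auto

lemma coset_act_lcoset: "coset_act a (lcoset x G) = lcoset (a * x) G"
  unfolding coset_act_def lcoset_def image_image by (simp add: mult.assoc)

lemma lcoset_in_cosets: "x \<noteq> 0 \<Longrightarrow> lcoset x G \<in> cosets G"
  unfolding cosets_def by auto

lemma cosetsE:
  assumes "z \<in> cosets G"
  obtains x where "x \<noteq> 0" "z = lcoset x G"
  using assms unfolding cosets_def by auto

lemma lcoset_mult_right:
  assumes G: "mult_subgroup G" and c: "c \<in> G"
  shows "lcoset (x * c) G = lcoset x G"
proof (intro equalityI subsetI)
  fix y assume "y \<in> lcoset (x * c) G"
  then obtain g where "g \<in> G" "y = x * (c * g)"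
    unfolding lcoset_def by (auto simp: mult.assoc)
  moreover have "c * g \<in> G" if "g \<in> G" for g
    using G c that unfolding mult_subgroup_def by auto
  ultimately show "y \<in> lcoset x G" unfolding lcoset_def by auto
next
  fix y assume "y \<in> lcoset x G"
  then obtain g where g: "g \<in> G" "y = x * g" unfolding lcoset_def by auto
  have "inverse c * g \<in> G" using G c g unfolding mult_subgroup_def by auto
  moreover have "y = x * c * (inverse c * g)"
    using g mult_subgroup_nonzero[OF G c] by (simp add: mult.assoc flip: mult.assoc[of c])
  ultimately show "y \<in> lcoset (x * c) G" unfolding lcoset_def by auto
qed

lemma lcoset_eqD:
  assumes "mult_subgroup G" "lcoset x G = lcoset y G"
  shows "\<exists>c\<in>G. y = x * c"
proof -
  have "y \<in> lcoset y G"
    using assms(1) unfolding mult_subgroup_def lcoset_def by force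
  then show ?thesis using assms(2) unfolding lcoset_def by auto
qed

lemma coset_rep_lcoset:
  assumes "mult_subgroup G" "x \<noteq> 0"
  shows "\<exists>c\<in>G. coset_rep G (lcoset x G) = x * c"
proof -
  have "coset_rep G (lcoset x G) \<noteq> 0 \<and> lcoset x G = lcoset (coset_rep G (lcoset x G)) G"
    unfolding coset_rep_def by (rule someI[of _ x]) (use assms(2) in simp)
  then show ?thesis using lcoset_eqD[OF assms(1)] by blast
qed

lemma represents_phi_expl: "represents G (phi_expl G f) f"
  unfolding represents_def phi_expl_def by (simp add: mult.assoc)

lemma phi_expl_zero: "phi_expl G f 0 = 0"
  unfolding phi_expl_def by simp

lemma represents_imp_eq_phi_expl:
  assumes "\<phi> 0 = 0" "represents G \<phi> f"
  shows "\<phi> = phi_expl G f"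
proof
  fix x
  show "\<phi> x = phi_expl G f x"
  proof (cases "x = 0")
    case False
    then have "\<phi> x = \<phi> x * inverse x * x" by (simp add: mult.assoc)
    with False assms(2) show ?thesis unfolding represents_def phi_expl_def by simp
  qed (simp add: assms(1) phi_expl_def)
qed

lemma represents_coset_fun:
  assumes "mult_subgroup G" "right_G_linear G \<phi>"
  shows "represents G \<phi> (coset_fun G \<phi>)"
  unfolding represents_def
proof (intro allI impI)
  fix x :: 'a assume "x \<noteq> 0"
  then obtain c where "c \<in> G" "coset_rep G (lcoset x G) = x * c"
    using coset_rep_lcoset[OF assms(1)] by blast
  with \<open>x \<noteq> 0\<close> assms show "coset_fun G \<phi> (lcoset x G) = \<phi> x * inverse x"
    unfolding coset_fun_def
    by (simp add: lcoset_in_cosets right_G_linear_mult_inverse_invariant mult_subgroup_nonzero)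
qed

lemma skew_prod_represents:
  assumes "\<phi> 0 = 0" "represents G \<phi> f" "represents G \<psi> g" "x \<noteq> 0"
  shows "skew_prod coset_act f g (lcoset x G) = \<phi> (\<psi> x) * inverse x"
proof (cases "\<psi> x = 0")
  case True
  then show ?thesis using assms unfolding represents_def skew_prod_def by simp
next
  case False
  have "coset_act (\<psi> x * inverse x) (lcoset x G) = lcoset (\<psi> x) G"
    using assms(4) by (simp add: coset_act_lcoset mult.assoc)
  then have "skew_prod coset_act f g (lcoset x G) = \<phi> (\<psi> x) * inverse (\<psi> x) * (\<psi> x * inverse x)"
    using assms(2-4) False unfolding represents_def skew_prod_def by simp
  also have "\<dots> = \<phi> (\<psi> x) * (inverse (\<psi> x) * \<psi> x) * inverse x"
    by (simp only: mult.assoc)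
  finally show ?thesis using False by simp
qed

lemma represents_const: "represents G (\<lambda>y. a * y) (\<lambda>_. a)"
  unfolding represents_def by (simp add: mult.assoc)

lemma skew_convex_if_represents:
  assumes "right_G_linear G \<phi>" "represents G \<phi> f"
  shows "skew_convex (cosets G) coset_act f"
  unfolding skew_convex_def
proof (intro allI ballI)
  fix a b z assume "z \<in> cosets G"
  then obtain x where "x \<noteq> 0" "z = lcoset x G" by (rule cosetsE)
  have "skew_prod coset_act f (\<lambda>_. c) (lcoset x G) = \<phi> (c * x) * inverse x" for c
    using skew_prod_represents[OF right_G_linear_zero[OF assms(1)] assms(2) represents_const \<open>x \<noteq> 0\<close>] .
  then show "skew_prod coset_act f (\<lambda>_. a + b) z
      = skew_prod coset_act f (\<lambda>_. a) z + skew_prod coset_act f (\<lambda>_. b) z"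
    using right_G_linear_add[OF assms(1)] \<open>z = lcoset x G\<close> by (simp add: distrib_right)
qed

lemma right_G_linear_phi_expl:
  assumes G: "mult_subgroup G" and f: "skew_convex (cosets G) coset_act f"
  shows "right_G_linear G (phi_expl G f)"
proof -
  have skew_prod_one: "skew_prod coset_act f (\<lambda>_. a) (lcoset 1 G) = phi_expl G f a" for a
    using skew_prod_represents[OF phi_expl_zero represents_phi_expl represents_const, where x = 1]
    by simp
  have add: "phi_expl G f (a + b) = phi_expl G f a + phi_expl G f b" for a b
    using f lcoset_in_cosets[of 1 G] unfolding skew_convex_def skew_prod_one[symmetric] by simp
  have "phi_expl G f (a - b) = phi_expl G f a - phi_expl G f b" for a b
    using add[of "a - b" b] by (simp add: eq_diff_eq)
  moreover have "phi_expl G f (a * c) = phi_expl G f a * c" if "c \<in> G" for a c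
    using mult_subgroup_nonzero[OF G that] lcoset_mult_right[OF G that]
    unfolding phi_expl_def by (simp add: mult.assoc)
  ultimately show ?thesis unfolding right_G_linear_def by blast
qed

lemma represents_unique:
  assumes "right_G_linear G \<phi>" "represents G \<phi> f" "right_G_linear G \<psi>" "represents G \<psi> f"
  shows "\<psi> = \<phi>"
  using represents_imp_eq_phi_expl[OF right_G_linear_zero[OF assms(1)] assms(2)]
    represents_imp_eq_phi_expl[OF right_G_linear_zero[OF assms(3)] assms(4)]
  by simp

lemma skew_convex_iff_ex1_represents:
  assumes "mult_subgroup G"
  shows "skew_convex (cosets G) coset_act f \<longleftrightarrow> (\<exists>!\<phi>. right_G_linear G \<phi> \<and> represents G \<phi> f)"
proof
  assume "skew_convex (cosets G) coset_act f"
  then have linear: "right_G_linear G (phi_expl G f)"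
    by (rule right_G_linear_phi_expl[OF assms])
  show "\<exists>!\<phi>. right_G_linear G \<phi> \<and> represents G \<phi> f"
  proof (rule ex1I[of _ "phi_expl G f"])
    show "right_G_linear G (phi_expl G f) \<and> represents G (phi_expl G f) f"
      using linear represents_phi_expl ..
    show "\<psi> = phi_expl G f" if "right_G_linear G \<psi> \<and> represents G \<psi> f" for \<psi>
      using represents_unique[OF linear represents_phi_expl] that by simp
  qed
next
  assume "\<exists>!\<phi>. right_G_linear G \<phi> \<and> represents G \<phi> f"
  then obtain \<phi> where "right_G_linear G \<phi>" "represents G \<phi> f" by (elim ex1E conjE)
  then show "skew_convex (cosets G) coset_act f" by (rule skew_convex_if_represents)
qed

lemma phi_of_eqI:
  assumes "right_G_linear G \<phi>" "represents G \<phi> f"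
  shows "phi_of G f = \<phi>"
  unfolding phi_of_def represents_def[symmetric]
proof (rule the_equality)
  show "right_G_linear G \<phi> \<and> represents G \<phi> f" using assms ..
  show "\<psi> = \<phi>" if "right_G_linear G \<psi> \<and> represents G \<psi> f" for \<psi>
    using represents_unique[OF assms] that by simp
qed

lemma
  assumes "mult_subgroup G" "f \<in> S_carrier (cosets G) coset_act"
  shows right_G_linear_phi_of: "right_G_linear G (phi_of G f)"
    and represents_phi_of: "represents G (phi_of G f) f"
proof -
  have "right_G_linear G (phi_expl G f)"
    using assms right_G_linear_phi_expl unfolding S_carrier_def by blast
  then have "phi_of G f = phi_expl G f"
    using phi_of_eqI represents_phi_expl by blast
  then show "right_G_linear G (phi_of G f)" "represents G (phi_of G f) f"
    using \<open>right_G_linear G (phi_expl G f)\<close> represents_phi_expl by simp_all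
qed

lemma inj_on_phi_of:
  assumes "mult_subgroup G"
  shows "inj_on (phi_of G) (S_carrier (cosets G) coset_act)"
proof (rule inj_onI)
  fix f g assume f: "f \<in> S_carrier (cosets G) coset_act" and g: "g \<in> S_carrier (cosets G) coset_act"
    and eq: "phi_of G f = phi_of G g"
  show "f = g"
  proof (rule extensionalityI)
    show "f \<in> extensional (cosets G)" "g \<in> extensional (cosets G)"
      using f g unfolding S_carrier_def by simp_all
    show "f z = g z" if "z \<in> cosets G" for z
      using that represents_phi_of[OF assms f] represents_phi_of[OF assms g] eq
      unfolding represents_def by (metis cosetsE)
  qed
qed

lemma phi_of_image:
  assumes "mult_subgroup G"
  shows "phi_of G ` S_carrier (cosets G) coset_act = {\<phi>. right_G_linear G \<phi>}"
proof (intro equalityI subsetI)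
  fix \<phi> assume "\<phi> \<in> phi_of G ` S_carrier (cosets G) coset_act"
  then show "\<phi> \<in> {\<phi>. right_G_linear G \<phi>}" using right_G_linear_phi_of[OF assms] by auto
next
  fix \<phi> assume "\<phi> \<in> {\<phi>. right_G_linear G \<phi>}"
  then have \<phi>: "right_G_linear G \<phi>" by simp
  have "coset_fun G \<phi> \<in> S_carrier (cosets G) coset_act"
    unfolding S_carrier_def using skew_convex_if_represents[OF \<phi> represents_coset_fun[OF assms \<phi>]]
    by (simp add: coset_fun_def)
  moreover have "phi_of G (coset_fun G \<phi>) = \<phi>"
    using phi_of_eqI[OF \<phi> represents_coset_fun[OF assms \<phi>]] .
  ultimately show "\<phi> \<in> phi_of G ` S_carrier (cosets G) coset_act" by (metis image_eqI)
qed

lemma phi_of_S_add: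
  assumes "mult_subgroup G" "f \<in> S_carrier (cosets G) coset_act" "g \<in> S_carrier (cosets G) coset_act"
  shows "phi_of G (S_add (cosets G) f g) = (\<lambda>x. phi_of G f x + phi_of G g x)"
proof (rule phi_of_eqI)
  show "right_G_linear G (\<lambda>x. phi_of G f x + phi_of G g x)"
    using assms by (simp add: right_G_linear_compose_add right_G_linear_phi_of)
  show "represents G (\<lambda>x. phi_of G f x + phi_of G g x) (S_add (cosets G) f g)"
    using represents_phi_of[OF assms(1,2)] represents_phi_of[OF assms(1,3)]
    unfolding represents_def S_add_def by (simp add: lcoset_in_cosets distrib_right)
qed

lemma phi_of_S_mult:
  assumes "mult_subgroup G" "f \<in> S_carrier (cosets G) coset_act" "g \<in> S_carrier (cosets G) coset_act"
  shows "phi_of G (S_mult (cosets G) coset_act f g) = phi_of G f \<circ> phi_of G g"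
proof (rule phi_of_eqI)
  show "right_G_linear G (phi_of G f \<circ> phi_of G g)"
    using assms by (simp add: right_G_linear_compose right_G_linear_phi_of)
  show "represents G (phi_of G f \<circ> phi_of G g) (S_mult (cosets G) coset_act f g)"
    using skew_prod_represents[OF right_G_linear_zero[OF right_G_linear_phi_of[OF assms(1,2)]]
        represents_phi_of[OF assms(1,2)]
        represents_phi_of[OF assms(1,3)]] right_G_linear_phi_of[OF assms(1,2)]
    unfolding represents_def S_mult_def by (simp add: lcoset_in_cosets)
qed

lemma phi_of_S_one: "phi_of G (S_one (cosets G)) = id"
  by (rule phi_of_eqI[OF right_G_linear_id])
    (simp add: represents_def S_one_def lcoset_in_cosets)

theorem proposition2p7:
  fixes G :: "'a::division_ring set"
  assumes "mult_subgroup G"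
  shows "(\<forall>f :: 'a set \<Rightarrow> 'a.
           skew_convex (cosets G) coset_act f \<longleftrightarrow>
           (\<exists>!\<phi>. right_G_linear G \<phi> \<and> (\<forall>x. x \<noteq> 0 \<longrightarrow> f (lcoset x G) = \<phi> x * inverse x)))
       \<and> bij_betw (phi_of G) (S_carrier (cosets G) coset_act) {\<phi>. right_G_linear G \<phi>}
       \<and> (\<forall>f\<in>S_carrier (cosets G) coset_act. \<forall>g\<in>S_carrier (cosets G) coset_act.
           phi_of G (S_add (cosets G) f g) = (\<lambda>x. phi_of G f x + phi_of G g x))
       \<and> (\<forall>f\<in>S_carrier (cosets G) coset_act. \<forall>g\<in>S_carrier (cosets G) coset_act.
           phi_of G (S_mult (cosets G) coset_act f g) = phi_of G f \<circ> phi_of G g)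
       \<and> phi_of G (S_one (cosets G)) = id"
proof (intro conjI ballI)
  show "\<forall>f. skew_convex (cosets G) coset_act f \<longleftrightarrow>
      (\<exists>!\<phi>. right_G_linear G \<phi> \<and> (\<forall>x. x \<noteq> 0 \<longrightarrow> f (lcoset x G) = \<phi> x * inverse x))"
    unfolding skew_convex_iff_ex1_represents[OF assms] represents_def by (intro allI refl)
  show "bij_betw (phi_of G) (S_carrier (cosets G) coset_act) {\<phi>. right_G_linear G \<phi>}"
    unfolding bij_betw_def using inj_on_phi_of[OF assms] phi_of_image[OF assms] ..
qed (simp_all only: phi_of_S_add[OF assms] phi_of_S_mult[OF assms] phi_of_S_one)

end
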